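(* Let a gyrocircle in the Einstein gyrovector space $\mathbb{R}^n_s$ be given, and let $P$ be a point exterior to it (in its gyroplane). Suppose two gyrosecants of the gyrocircle drawn from $P$ meet the gyrocircle at the points $A_2,A_3$ and at the points $B_2,B_3$, respectively. Then $$\frac{\gamma_{|PA_2|}|PA_2|\,\gamma_{|PA_3|}|PA_3|}{\gamma_{|A_2A_3|}+1}=\frac{\gamma_{|PB_2|}|PB_2|\,\gamma_{|PB_3|}|PB_3|}{\gamma_{|B_2B_3|}+1},$$ where $|XY|=\|\ominus X\oplus Y\|$ denotes gyrodistance and $\gamma_a=(1-a^2/s^2)^{-1/2}$.
   Context: Fix $s>0$, $n\ge2$; $\mathbb{R}^n_s=\{v\in\mathbb{R}^n:\|v\|<s\}$ with Einstein addition $u\oplus v=\frac{1}{1+u\cdot v/s^2}\{u+\frac{1}{\gamma_u}v+\frac{1}{s^2}\frac{\gamma_u}{1+\gamma_u}(u\cdot v)u\}$, $\gamma_v=(1-\|v\|^2/s^2)^{-1/2}$, $\ominus v=-v$. Gyrolines are intersections of Euclidean lines with the ball. A gyroplane is $(A_1\oplus\mathrm{span}\{\ominus A_1\oplus A_2,\ominus A_1\oplus A_3\})\cap\mathbb{R}^n_s$ for $\ominus A_1\oplus A_2,\ominus A_1\oplus A_3$ linearly independent; a gyrocircle with gyrocenter $O$ and gyroradius $r>0$ is the set of points of a gyroplane containing $O$ at gyrodistance $r$ from $O$; its exterior consists of points of that gyroplane at gyrodistance $>r$ from $O$. A gyrosecant is a gyroline meeting the gyrocircle in two different points. *)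

theory Defs
  imports "HOL-Analysis.Analysis"
begin

text \<open>The Einstein gyrovector space R^n_s, with points modelled as vectors of type real^'n.\<close>

definition eball :: "real \<Rightarrow> ('a::real_inner) set" where
  "eball s = {v. norm v < s}"

definition gam :: "real \<Rightarrow> real \<Rightarrow> real" where
  "gam s a = 1 / sqrt (1 - a\<^sup>2 / s\<^sup>2)"

definition gamv :: "real \<Rightarrow> 'a::real_inner \<Rightarrow> real" where
  "gamv s v = gam s (norm v)"

definition eadd :: "real \<Rightarrow> 'a::real_inner \<Rightarrow> 'a \<Rightarrow> 'a" where
  "eadd s u v = (1 / (1 + (u \<bullet> v) / s\<^sup>2)) *\<^sub>R
     (u + (1 / gamv s u) *\<^sub>R v + ((1 / s\<^sup>2) * (gamv s u / (1 + gamv s u)) * (u \<bullet> v)) *\<^sub>R u)"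

definition eminus :: "'a::real_inner \<Rightarrow> 'a" where
  "eminus v = - v"

definition gdist :: "real \<Rightarrow> 'a::real_inner \<Rightarrow> 'a \<Rightarrow> real" where
  "gdist s X Y = norm (eadd s (eminus X) Y)"

definition gyroline :: "real \<Rightarrow> ('a::real_inner) set \<Rightarrow> bool" where
  "gyroline s L \<longleftrightarrow> (\<exists>a b. a \<noteq> b \<and> L = {a + t *\<^sub>R (b - a) | t. True} \<inter> eball s)"

definition gyroplane_through :: "real \<Rightarrow> 'a::real_inner \<Rightarrow> 'a \<Rightarrow> 'a \<Rightarrow> 'a set" where
  "gyroplane_through s A1 A2 A3 =
     {eadd s A1 v | v. v \<in> span {eadd s (eminus A1) A2, eadd s (eminus A1) A3} \<inter> eball s}
     \<inter> eball s"

definition gyroplane :: "real \<Rightarrow> ('a::real_inner) set \<Rightarrow> bool" where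
  "gyroplane s G \<longleftrightarrow> (\<exists>A1 A2 A3. A1 \<in> eball s \<and> A2 \<in> eball s \<and> A3 \<in> eball s \<and>
      independent {eadd s (eminus A1) A2, eadd s (eminus A1) A3} \<and>
      eadd s (eminus A1) A2 \<noteq> eadd s (eminus A1) A3 \<and>
      G = gyroplane_through s A1 A2 A3)"

definition gyrocircle :: "real \<Rightarrow> 'a::real_inner set \<Rightarrow> 'a \<Rightarrow> real \<Rightarrow> 'a set" where
  "gyrocircle s G C r = {X \<in> G. gdist s C X = r}"

definition gyrocircle_exterior :: "real \<Rightarrow> 'a::real_inner set \<Rightarrow> 'a \<Rightarrow> real \<Rightarrow> 'a set" where
  "gyrocircle_exterior s G C r = {X \<in> G. gdist s C X > r}"

end

theory Submission
  imports Defs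
begin

text \<open>Since \<open>\<gamma>\<^bsub>|XY|\<^esub> = \<gamma>\<^sub>X \<gamma>\<^sub>Y (1 - X\<cdot>Y/s\<^sup>2)\<close>, every quantity in the theorem is an
  explicit function of the Euclidean parameter \<open>t\<close> of a gyrosecant \<open>P + t d\<close>. Lying on the gyrocircle
  \<open>\<gamma>\<^bsub>|CX|\<^esub> = \<gamma>\<^sub>r\<close> is a quadratic equation in \<open>t\<close>, and Vieta's formulas for its two roots
  show that both sides equal \<open>s\<^sup>2 (\<gamma>\<^bsub>|CP|\<^esub>\<^sup>2 - \<gamma>\<^sub>r\<^sup>2) / (2 \<gamma>\<^sub>r\<^sup>2)\<close>, independently of the secant.
  The argument only needs the points to lie in the ball, so neither the gyroplane nor the
  dimension hypothesis plays a further role.\<close>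

lemma one_minus_inner_div_pos:
  fixes X Y :: "'a::real_inner"
  assumes s: "s > 0" and "norm X < s" "norm Y < s"
  shows "0 < 1 - X \<bullet> Y / s\<^sup>2"
proof -
  have "X \<bullet> Y \<le> norm X * norm Y" by (rule norm_cauchy_schwarz)
  also have "\<dots> < s * s" using assms by (meson mult_strict_mono' norm_ge_zero)
  finally show ?thesis using s by (simp add: power2_eq_square)
qed

text \<open>The Lorentz factor identity \<open>\<gamma>\<^sub>u\<^sub>\<oplus>\<^sub>v = \<gamma>\<^sub>u \<gamma>\<^sub>v (1 + u\<cdot>v/s\<^sup>2)\<close>, squared and inverted.\<close>

lemma norm_eadd_sq:
  fixes u v :: "'a::real_inner"
  assumes s: "s > 0" and u: "norm u < s" and v: "norm v < s"
  shows "1 - (norm (eadd s u v))\<^sup>2 / s\<^sup>2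
       = (1 - u \<bullet> u / s\<^sup>2) * (1 - v \<bullet> v / s\<^sup>2) / (1 + u \<bullet> v / s\<^sup>2)\<^sup>2"
proof -
  define w where "w = sqrt (1 - u \<bullet> u / s\<^sup>2)"
  define h where "h = (u \<bullet> v) / (s\<^sup>2 * (1 + w))"
  have w0: "w > 0" and w2: "w\<^sup>2 = 1 - u \<bullet> u / s\<^sup>2"
    using one_minus_inner_div_pos[OF s u u] by (auto simp: w_def)
  then have uu: "u \<bullet> u = s\<^sup>2 * (1 - w\<^sup>2)"
    using s by (simp add: field_simps)
  have den: "1 + u \<bullet> v / s\<^sup>2 > 0"
    using one_minus_inner_div_pos[OF s, of "-u" v] u v by simp
  have g: "gamv s u = 1 / w"
    by (simp add: gamv_def gam_def w_def power2_norm_eq_inner)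
  have "(1 / s\<^sup>2) * (gamv s u / (1 + gamv s u)) * (u \<bullet> v) = h"
    using w0 s by (simp add: g h_def field_simps)
  then have "eadd s u v = (1 / (1 + u \<bullet> v / s\<^sup>2)) *\<^sub>R ((1 + h) *\<^sub>R u + w *\<^sub>R v)"
    unfolding eadd_def by (simp add: g algebra_simps)
  moreover have "(norm ((1 + h) *\<^sub>R u + w *\<^sub>R v))\<^sup>2
      = (1 + h)\<^sup>2 * (u \<bullet> u) + 2 * (1 + h) * w * (u \<bullet> v) + w\<^sup>2 * (v \<bullet> v)"
    unfolding power2_norm_eq_inner
    by (simp add: inner_add_left inner_add_right inner_commute power2_eq_square algebra_simps)
  ultimately have "(norm (eadd s u v))\<^sup>2 * (1 + u \<bullet> v / s\<^sup>2)\<^sup>2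
      = (1 + h)\<^sup>2 * (u \<bullet> u) + 2 * (1 + h) * w * (u \<bullet> v) + w\<^sup>2 * (v \<bullet> v)"
    using den by (simp add: power_mult_distrib power_divide)
  also have "\<dots> = s\<^sup>2 * (1 + u \<bullet> v / s\<^sup>2)\<^sup>2 - w\<^sup>2 * (s\<^sup>2 - v \<bullet> v)"
  proof -
    have "u \<bullet> v = h * s\<^sup>2 * (1 + w)" using s w0 by (simp add: h_def)
    then show ?thesis using s unfolding uu by (simp add: field_simps power2_eq_square)
  qed
  finally show ?thesis
    using s den by (simp add: w2 field_simps) algebra
qed

lemma gdist_less_and_gam_gdist:
  fixes X Y :: "'a::real_inner"
  assumes s: "s > 0" and X: "norm X < s" and Y: "norm Y < s"
  shows gdist_less: "gdist s X Y < s"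
    and gam_gdist: "gam s (gdist s X Y)
                      = (1 - X \<bullet> Y / s\<^sup>2) / (sqrt (1 - X \<bullet> X / s\<^sup>2) * sqrt (1 - Y \<bullet> Y / s\<^sup>2))"
proof -
  define W where "W = sqrt (1 - X \<bullet> X / s\<^sup>2) * sqrt (1 - Y \<bullet> Y / s\<^sup>2)"
  define L where "L = 1 - X \<bullet> Y / s\<^sup>2"
  have "W > 0" "L > 0"
    using one_minus_inner_div_pos[OF s X X] one_minus_inner_div_pos[OF s Y Y]
      one_minus_inner_div_pos[OF s X Y] by (simp_all add: W_def L_def)
  have "1 - (gdist s X Y)\<^sup>2 / s\<^sup>2 = (W / L)\<^sup>2"
    using norm_eadd_sq[OF s, of "-X" Y] one_minus_inner_div_pos[OF s X X]
      one_minus_inner_div_pos[OF s Y Y] X Y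
    by (simp add: gdist_def eminus_def W_def L_def power_divide power_mult_distrib)
  moreover have "(W / L)\<^sup>2 > 0" using \<open>W > 0\<close> \<open>L > 0\<close> by simp
  ultimately have "(gdist s X Y)\<^sup>2 / s\<^sup>2 < 1" by linarith
  then have "(gdist s X Y)\<^sup>2 < s\<^sup>2" using s by simp
  then show "gdist s X Y < s" using s by (simp add: power2_less_imp_less)
  show "gam s (gdist s X Y) = L / W"
    using \<open>1 - (gdist s X Y)\<^sup>2 / s\<^sup>2 = (W / L)\<^sup>2\<close> \<open>W > 0\<close> \<open>L > 0\<close> by (simp add: gam_def)
qed

lemma gam_pos:
  assumes "s > 0" "0 \<le> x" "x < s"
  shows "gam s x > 0"
proof -
  have "x\<^sup>2 < s\<^sup>2" using assms by (simp add: power_strict_mono)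
  then show ?thesis using assms(1) by (simp add: gam_def)
qed

lemma gam_mult_eq_sqrt:
  assumes s: "s > 0" and x: "0 \<le> x" "x < s"
  shows "gam s x * x = s * sqrt ((gam s x)\<^sup>2 - 1)"
proof -
  define m where "m = 1 - x\<^sup>2 / s\<^sup>2"
  have m: "0 < m" using s x by (simp add: m_def power_strict_mono)
  have g2: "(gam s x)\<^sup>2 = 1 / m" using m by (simp add: gam_def m_def power_divide)
  have "1 / m - 1 = (1 - m) / m" using m by (simp add: field_simps)
  then have "(gam s x)\<^sup>2 - 1 = (gam s x * x / s)\<^sup>2"
    by (simp add: g2 power_mult_distrib power_divide m_def)
  moreover have "gam s x * x \<ge> 0" using x m by (simp add: gam_def m_def)
  ultimately show ?thesis using s by simp
qed

lemma gam_strict_mono: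
  assumes s: "s > 0" and "0 \<le> x" "x < y" "y < s"
  shows "gam s x < gam s y"
proof -
  have "x\<^sup>2 < y\<^sup>2" "y\<^sup>2 < s\<^sup>2" using assms by (simp_all add: power_strict_mono)
  then have "0 < 1 - y\<^sup>2 / s\<^sup>2" "1 - y\<^sup>2 / s\<^sup>2 < 1 - x\<^sup>2 / s\<^sup>2"
    using s by (simp_all add: divide_strict_right_mono)
  then show ?thesis by (simp add: gam_def frac_less2)
qed

lemma vieta_of_distinct_roots:
  fixes A B C x y :: real
  assumes "x \<noteq> y" and x: "A * x\<^sup>2 + B * x + C = 0" and y: "A * y\<^sup>2 + B * y + C = 0"
  shows "A * (x + y) = - B" and "A * (x * y) = C"
proof -
  have "(x - y) * (A * (x + y) + B) = 0"
    using x y by (simp add: power2_eq_square algebra_simps)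
  then show sum: "A * (x + y) = - B" using \<open>x \<noteq> y\<close> by simp
  show "A * (x * y) = C" using x sum by algebra
qed

lemma secant_power_algebra:
  fixes a b g E F k t2 t3 w2 w3 :: real
  assumes a: "a > 0" and g: "g < 0" and k: "k > 0" and t: "t2 \<noteq> t3"
    and w2: "w2\<^sup>2 = a + 2 * b * t2 + g * t2\<^sup>2" and w3: "w3\<^sup>2 = a + 2 * b * t3 + g * t3\<^sup>2"
    and E2: "E + F * t2 = k * w2" and E3: "E + F * t3 = k * w3"
    and ext: "k\<^sup>2 * a < E\<^sup>2"
  shows "t2 * t3 > 0"
    and "t2 * t3 * (b\<^sup>2 - a * g) / (a + b * (t2 + t3) + g * (t2 * t3) + w2 * w3)
       = (E\<^sup>2 - k\<^sup>2 * a) / (2 * k\<^sup>2)"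
proof -
  \<comment> \<open>Squaring \<open>E + F t = k w\<close> makes the circle condition a quadratic in \<open>t\<close> with roots \<open>t2, t3\<close>.\<close>
  define Q where "Q = F\<^sup>2 - k\<^sup>2 * g"
  define R where "R = 2 * (E * F - k\<^sup>2 * b)"
  define S where "S = E\<^sup>2 - k\<^sup>2 * a"
  have root: "Q * t\<^sup>2 + R * t + S = 0" if "E + F * t = k * w" "w\<^sup>2 = a + 2 * b * t + g * t\<^sup>2"
    for t w
  proof -
    have "(E + F * t)\<^sup>2 = k\<^sup>2 * (a + 2 * b * t + g * t\<^sup>2)"
      using that by (simp add: power_mult_distrib)
    then show ?thesis by (simp add: Q_def R_def S_def power2_eq_square algebra_simps)
  qed
  note vieta = vieta_of_distinct_roots[OF t root[OF E2 w2] root[OF E3 w3]]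
  have Q0: "Q > 0"
    using mult_pos_neg[OF zero_less_power[OF k] g, of 2] zero_le_power2[of F]
    unfolding Q_def by linarith
  have S0: "S > 0" using ext by (simp add: S_def)
  show "t2 * t3 > 0" using vieta(2) Q0 S0 zero_less_mult_pos[of Q "t2 * t3"] by simp
  have D0: "b\<^sup>2 - a * g > 0" using mult_pos_neg[OF a g] zero_le_power2[of b] by linarith
  have "k\<^sup>2 * (w2 * w3) = (E + F * t2) * (E + F * t3)"
    unfolding E2 E3 by (simp add: power2_eq_square)
  then have "Q * (k\<^sup>2 * (a + b * (t2 + t3) + g * (t2 * t3) + w2 * w3))
      = Q * (k\<^sup>2 * a + E\<^sup>2) + (k\<^sup>2 * b + E * F) * (Q * (t2 + t3))
        + (k\<^sup>2 * g + F\<^sup>2) * (Q * (t2 * t3))"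
    by (simp add: power2_eq_square algebra_simps)
  also have "\<dots> = 2 * k\<^sup>2 * k\<^sup>2 * (b\<^sup>2 - a * g)"
    unfolding vieta by (simp add: Q_def R_def S_def power2_eq_square algebra_simps)
  finally have "k\<^sup>2 * (Q * (a + b * (t2 + t3) + g * (t2 * t3) + w2 * w3))
      = k\<^sup>2 * (2 * k\<^sup>2 * (b\<^sup>2 - a * g))"
    by (simp only: ac_simps)
  then have "Q * (a + b * (t2 + t3) + g * (t2 * t3) + w2 * w3) = 2 * k\<^sup>2 * (b\<^sup>2 - a * g)"
    using k by simp
  then have den: "a + b * (t2 + t3) + g * (t2 * t3) + w2 * w3 = 2 * k\<^sup>2 * (b\<^sup>2 - a * g) / Q"
    using Q0 by (simp add: eq_divide_eq mult.commute)
  have "t2 * t3 * (b\<^sup>2 - a * g) / (a + b * (t2 + t3) + g * (t2 * t3) + w2 * w3)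
      = Q * (t2 * t3) / (2 * k\<^sup>2)"
    unfolding den using Q0 D0 k by (simp add: field_simps)
  then show "t2 * t3 * (b\<^sup>2 - a * g) / (a + b * (t2 + t3) + g * (t2 * t3) + w2 * w3)
       = (E\<^sup>2 - k\<^sup>2 * a) / (2 * k\<^sup>2)"
    by (simp only: vieta(2) S_def)
qed

lemma secant_power_real:
  fixes a b g E F k t2 t3 w2 w3 s :: real
  assumes a: "a > 0" and g: "g < 0" and k: "k > 0" and t: "t2 \<noteq> t3"
    and w2: "w2 > 0" "w2\<^sup>2 = a + 2 * b * t2 + g * t2\<^sup>2"
    and w3: "w3 > 0" "w3\<^sup>2 = a + 2 * b * t3 + g * t3\<^sup>2"
    and E2: "E + F * t2 = k * w2" and E3: "E + F * t3 = k * w3"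
    and ext: "k < E / sqrt a"
  shows "s * sqrt (((a + b * t2) / (sqrt a * w2))\<^sup>2 - 1)
           * (s * sqrt (((a + b * t3) / (sqrt a * w3))\<^sup>2 - 1))
           / ((a + b * (t2 + t3) + g * (t2 * t3)) / (w2 * w3) + 1)
       = s\<^sup>2 * ((E / sqrt a)\<^sup>2 - k\<^sup>2) / (2 * k\<^sup>2)"
proof -
  define D where "D = b\<^sup>2 - a * g"
  have D0: "D > 0" using mult_pos_neg[OF a g] zero_le_power2[of b] unfolding D_def by linarith
  have sqrt_eq: "sqrt (((a + b * t) / (sqrt a * w))\<^sup>2 - 1) = \<bar>t\<bar> * sqrt D / (sqrt a * w)"
    if "w > 0" "w\<^sup>2 = a + 2 * b * t + g * t\<^sup>2" for t w
  proof -
    have "((a + b * t) / (sqrt a * w))\<^sup>2 - 1 = ((a + b * t)\<^sup>2 - a * w\<^sup>2) / (a * w\<^sup>2)"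
      using a that(1) by (simp add: power_divide power_mult_distrib field_simps)
    also have "\<dots> = t\<^sup>2 * D / (a * w\<^sup>2)"
      unfolding that(2) D_def by (simp add: power2_eq_square algebra_simps)
    also have "\<dots> = (\<bar>t\<bar> * sqrt D / (sqrt a * w))\<^sup>2"
      using a D0 by (simp add: power_divide power_mult_distrib)
    finally show ?thesis using a D0 that(1) by simp
  qed
  have ext': "k\<^sup>2 * a < E\<^sup>2"
  proof -
    have "k * sqrt a < E" using ext a by (simp add: field_simps)
    then have "(k * sqrt a)\<^sup>2 < E\<^sup>2" using k a by (intro power_strict_mono) auto
    then show ?thesis using a by (simp add: power_mult_distrib)
  qed
  note alg = secant_power_algebra[OF a g k t w2(2) w3(2) E2 E3 ext']
  have N0: "a + b * (t2 + t3) + g * (t2 * t3) + w2 * w3 \<noteq> 0"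
    using alg D0 k ext' by (auto simp: D_def)
  have "\<bar>t2\<bar> * \<bar>t3\<bar> = t2 * t3" using alg(1) by (simp flip: abs_mult)
  then have "s * sqrt (((a + b * t2) / (sqrt a * w2))\<^sup>2 - 1)
           * (s * sqrt (((a + b * t3) / (sqrt a * w3))\<^sup>2 - 1))
           / ((a + b * (t2 + t3) + g * (t2 * t3)) / (w2 * w3) + 1)
      = s\<^sup>2 / a * (t2 * t3 * D / (a + b * (t2 + t3) + g * (t2 * t3) + w2 * w3))"
    unfolding sqrt_eq[OF w2] sqrt_eq[OF w3] using a D0 w2(1) w3(1) N0
    by (simp add: field_simps power2_eq_square)
  also have "\<dots> = s\<^sup>2 * ((E / sqrt a)\<^sup>2 - k\<^sup>2) / (2 * k\<^sup>2)"
    unfolding D_def alg(2) using a k by (simp add: power_divide field_simps)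
  finally show ?thesis .
qed

lemma gyrosecant_power:
  fixes C P d X2 X3 :: "'a::real_inner"
  assumes s: "s > 0" and C: "norm C < s" and P: "norm P < s"
    and X2: "norm X2 < s" "X2 = P + t2 *\<^sub>R d" and X3: "norm X3 < s" "X3 = P + t3 *\<^sub>R d"
    and "X2 \<noteq> X3"
    and k2: "gam s (gdist s C X2) = k" and k3: "gam s (gdist s C X3) = k"
    and ext: "k < gam s (gdist s C P)"
  shows "gam s (gdist s P X2) * gdist s P X2 * (gam s (gdist s P X3) * gdist s P X3)
           / (gam s (gdist s X2 X3) + 1)
       = s\<^sup>2 * ((gam s (gdist s C P))\<^sup>2 - k\<^sup>2) / (2 * k\<^sup>2)"
proof -
  define a where "a = 1 - P \<bullet> P / s\<^sup>2"
  define b where "b = - (P \<bullet> d) / s\<^sup>2"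
  define g where "g = - (d \<bullet> d) / s\<^sup>2"
  define wC where "wC = sqrt (1 - C \<bullet> C / s\<^sup>2)"
  define E where "E = (1 - C \<bullet> P / s\<^sup>2) / wC"
  define F where "F = - (C \<bullet> d) / s\<^sup>2 / wC"
  define w where "w X = sqrt (1 - X \<bullet> X / s\<^sup>2)" for X :: 'a
  have "d \<noteq> 0" "t2 \<noteq> t3" using \<open>X2 \<noteq> X3\<close> X2(2) X3(2) by auto
  then have g0: "g < 0" using s by (simp add: g_def)
  have a0: "a > 0" using one_minus_inner_div_pos[OF s P P] by (simp add: a_def)
  have w0: "w X > 0" if "norm X < s" for X
    using one_minus_inner_div_pos[OF s that that] by (simp add: w_def)
  have inner_line: "1 - (P + t *\<^sub>R d) \<bullet> (P + u *\<^sub>R d) / s\<^sup>2 = a + b * (t + u) + g * (t * u)"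
    for t u by (simp add: a_def b_def g_def inner_add_left inner_add_right inner_commute[of d P]
        diff_divide_distrib add_divide_distrib algebra_simps)
  have w_sq: "(w X)\<^sup>2 = a + 2 * b * t + g * t\<^sup>2" if "norm X < s" "X = P + t *\<^sub>R d" for X t
    using one_minus_inner_div_pos[OF s that(1) that(1)] inner_line[of t t]
    by (simp add: w_def that(2) power2_eq_square)
  have gam_PX: "gam s (gdist s P X) = (a + b * t) / (sqrt a * w X)"
    if "norm X < s" "X = P + t *\<^sub>R d" for X t
    using gam_gdist[OF s P that(1)] by (simp add: that(2) w_def a_def b_def inner_add_right
        diff_divide_distrib add_divide_distrib)
  have gam_CX: "gam s (gdist s C X) = (E + F * t) / w X"
    if "norm X < s" "X = P + t *\<^sub>R d" for X t
    using gam_gdist[OF s C that(1)] by (simp add: that(2) w_def E_def F_def wC_def inner_add_right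
        diff_divide_distrib add_divide_distrib mult.commute)
  have gam_CP: "gam s (gdist s C P) = E / sqrt a"
    using gam_gdist[OF s C P] by (simp add: E_def wC_def a_def mult.commute)
  have gam_X23: "gam s (gdist s X2 X3) = (a + b * (t2 + t3) + g * (t2 * t3)) / (w X2 * w X3)"
    using gam_gdist[OF s X2(1) X3(1)] inner_line[of t2 t3] by (simp add: X2(2) X3(2) w_def)
  have k0: "k > 0"
    using k2 gam_pos[OF s _ gdist_less[OF s C X2(1)]] by (simp add: gdist_def)
  have on_circle: "E + F * t = k * w X"
    if "norm X < s" "X = P + t *\<^sub>R d" "gam s (gdist s C X) = k" for X t
    using that(3) w0[OF that(1)] by (simp add: gam_CX[OF that(1,2)] field_simps)
  have gam_mult_PX: "gam s (gdist s P X) * gdist s P X = s * sqrt ((gam s (gdist s P X))\<^sup>2 - 1)"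
    if "norm X < s" for X
    using gam_mult_eq_sqrt[OF s _ gdist_less[OF s P that]] by (simp add: gdist_def)
  show ?thesis
    unfolding gam_mult_PX[OF X2(1)] gam_mult_PX[OF X3(1)]
    unfolding gam_PX[OF X2] gam_PX[OF X3] gam_X23 gam_CP
    by (rule secant_power_real[OF a0 g0 k0 \<open>t2 \<noteq> t3\<close> w0[OF X2(1)] w_sq[OF X2]
          w0[OF X3(1)] w_sq[OF X3] on_circle[OF X2 k2] on_circle[OF X3 k3] ext[unfolded gam_CP]])
qed

lemma gyroline_parametrization:
  fixes P :: "'a::real_inner"
  assumes "gyroline s L" "P \<in> L"
  obtains d where "\<And>X. X \<in> L \<Longrightarrow> \<exists>t. X = P + t *\<^sub>R d"
proof -
  obtain p q where L: "L = {p + t *\<^sub>R (q - p) | t. True} \<inter> eball s"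
    using assms(1) unfolding gyroline_def by blast
  then obtain tP where tP: "P = p + tP *\<^sub>R (q - p)" using assms(2) by blast
  have "\<exists>t. X = P + t *\<^sub>R (q - p)" if "X \<in> L" for X
  proof -
    obtain tX where "X = p + tX *\<^sub>R (q - p)" using \<open>X \<in> L\<close> L by blast
    then have "X = P + (tX - tP) *\<^sub>R (q - p)" by (simp add: tP algebra_simps)
    then show ?thesis by blast
  qed
  then show thesis by (rule that)
qed

theorem mainTheorem5:
  fixes s r :: real and G :: "(real ^ 'n) set" and C P A2 A3 B2 B3 :: "real ^ 'n"
    and L1 L2 :: "(real ^ 'n) set"
  assumes "CARD('n) \<ge> 2" and "s > 0"
    and "gyroplane s G" and "C \<in> G" and "r > 0"
    and "P \<in> gyrocircle_exterior s G C r"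
    and "gyroline s L1" and "P \<in> L1"
    and "A2 \<noteq> A3" and "A2 \<in> L1 \<inter> gyrocircle s G C r" and "A3 \<in> L1 \<inter> gyrocircle s G C r"
    and "gyroline s L2" and "P \<in> L2"
    and "B2 \<noteq> B3" and "B2 \<in> L2 \<inter> gyrocircle s G C r" and "B3 \<in> L2 \<inter> gyrocircle s G C r"
  shows "gam s (gdist s P A2) * gdist s P A2 * (gam s (gdist s P A3) * gdist s P A3)
           / (gam s (gdist s A2 A3) + 1)
       = gam s (gdist s P B2) * gdist s P B2 * (gam s (gdist s P B3) * gdist s P B3)
           / (gam s (gdist s B2 B3) + 1)"
proof -
  note s = \<open>s > 0\<close>
  have in_ball: "norm X < s" if "X \<in> G" for X
    using \<open>gyroplane s G\<close> that by (auto simp: gyroplane_def gyroplane_through_def eball_def)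
  have C: "norm C < s" using in_ball \<open>C \<in> G\<close> .
  have P: "norm P < s" "r < gdist s C P"
    using \<open>P \<in> gyrocircle_exterior s G C r\<close> in_ball by (auto simp: gyrocircle_exterior_def)
  have ext: "gam s r < gam s (gdist s C P)"
    using gam_strict_mono[OF s _ P(2) gdist_less[OF s C P(1)]] \<open>r > 0\<close> by simp
  have on_circle: "norm X < s" "gam s (gdist s C X) = gam s r" if "X \<in> gyrocircle s G C r" for X
    using that in_ball by (auto simp: gyrocircle_def)
  have secant_value: "gam s (gdist s P X2) * gdist s P X2 * (gam s (gdist s P X3) * gdist s P X3)
           / (gam s (gdist s X2 X3) + 1)
         = s\<^sup>2 * ((gam s (gdist s C P))\<^sup>2 - (gam s r)\<^sup>2) / (2 * (gam s r)\<^sup>2)"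
    if L: "gyroline s L" "P \<in> L" and "X2 \<noteq> X3"
      and X2: "X2 \<in> L \<inter> gyrocircle s G C r" and X3: "X3 \<in> L \<inter> gyrocircle s G C r" for L X2 X3
  proof -
    obtain d where "\<And>X. X \<in> L \<Longrightarrow> \<exists>t. X = P + t *\<^sub>R d"
      using gyroline_parametrization[OF L] by blast
    then obtain t2 t3 where "X2 = P + t2 *\<^sub>R d" "X3 = P + t3 *\<^sub>R d" using X2 X3 by blast
    then show ?thesis
      using gyrosecant_power[OF s C P(1)] on_circle X2 X3 \<open>X2 \<noteq> X3\<close> ext by blast
  qed
  show ?thesis using secant_value[OF assms(7-11)] secant_value[OF assms(12-16)] by simp
qed

end
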